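(* For every integer $n>2$ there exist an integer $N\ge n$ and a probability vector $p=(p_1,\dots,p_N)$ with all $p_k>0$ such that $D(p)<0$.
   Context: For $N\ge2$ and a probability vector $p=(p_1,\dots,p_N)$ with all $p_k>0$, $$D(p)=2\log N+\frac1N\sum_{k=1}^N(\log p_k)^2-\frac1{N^2}\Big(\sum_{k=1}^N\log p_k\Big)^2+\frac2N\sum_{k=1}^N\log p_k,$$ which equals $\lim_{\alpha\to0+}\frac{\partial^2}{\partial\alpha^2}\mathcal H_\alpha(p)$ for the Rényi entropy $\mathcal H_\alpha(p)=\frac1{1-\alpha}\log\sum_k p_k^\alpha$. Logarithms are natural. *)

theory Defs
  imports Complex_Main
begin

text \<open>Probability vectors of length N, represented as functions on the index set {0..<N}
  (the paper's p_1..p_N correspond to p 0 .. p (N-1)).\<close>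
definition prob_vector :: "nat \<Rightarrow> (nat \<Rightarrow> real) \<Rightarrow> bool" where
  "prob_vector N p \<longleftrightarrow> (\<forall>k<N. p k > 0) \<and> (\<Sum>k<N. p k) = 1"

text \<open>The second derivative of the Renyi entropy at alpha = 0+, as given explicitly.\<close>
definition D :: "nat \<Rightarrow> (nat \<Rightarrow> real) \<Rightarrow> real" where
  "D N p = 2 * ln (real N) + (1 / real N) * (\<Sum>k<N. (ln (p k))^2)
           - (1 / (real N)^2) * (\<Sum>k<N. ln (p k))^2
           + (2 / real N) * (\<Sum>k<N. ln (p k))"

end

theory Submission
  imports Defs
begin

text \<open>Put mass of order 1 on one entry and e^-N on each of the other N - 1 entries. The
  logarithms then take two values a distance N apart, so their variance is N - 1 and their mean
  is a - (N - 1) with a = -ln(1 + (N - 1) e^-N) \<le> 0; hence D = 2 ln N - (N - 1) + 2a,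
  which is negative as soon as 2 ln N < N - 1.\<close>

lemma D_two_level:
  assumes "N \<ge> 1" and "ln (p 0) = a" and "\<And>k. 0 < k \<Longrightarrow> k < N \<Longrightarrow> ln (p k) = b"
  shows "D N p = 2 * ln (real N) + (real N - 1) * (a - b)\<^sup>2 / (real N)\<^sup>2
    + 2 * (a + (real N - 1) * b) / real N"
proof -
  obtain m where N: "N = Suc m" using assms(1) by (cases N) auto
  have sum_ln: "(\<Sum>k<N. ln (p k)) = a + (real N - 1) * b"
    unfolding N sum.lessThan_Suc_shift using assms(2,3) by (simp add: N)
  have sum_ln_sq: "(\<Sum>k<N. (ln (p k))\<^sup>2) = a\<^sup>2 + (real N - 1) * b\<^sup>2"
    unfolding N sum.lessThan_Suc_shift using assms(2,3) by (simp add: N)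
  have "real N > 0" using assms(1) by simp
  then show ?thesis
    unfolding D_def sum_ln sum_ln_sq by (simp add: field_simps power2_eq_square)
qed
definition spike :: "nat \<Rightarrow> nat \<Rightarrow> real" where
  "spike N k = (if k = 0 then 1 else exp (- real N)) / (1 + (real N - 1) * exp (- real N))"

lemma spike_normaliser_ge_one: "N \<ge> 1 \<Longrightarrow> 1 + (real N - 1) * exp (- real N) \<ge> 1"
  by simp

lemma prob_vector_spike:
  assumes "N \<ge> 1"
  shows "prob_vector N (spike N)"
proof -
  obtain m where N: "N = Suc m" using assms by (cases N) auto
  have "1 + real m * exp (- real N) > 0" by (simp add: add_pos_nonneg)
  then have "(\<Sum>k<N. spike N k) = 1"
    unfolding N sum.lessThan_Suc_shift by (simp add: spike_def N add_divide_distrib[symmetric])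
  then show ?thesis
    using spike_normaliser_ge_one[OF assms] by (auto simp: prob_vector_def spike_def)
qed

lemma D_spike:
  assumes "N \<ge> 1"
  shows "D N (spike N) = 2 * ln (real N) - (real N - 1)
    - 2 * ln (1 + (real N - 1) * exp (- real N))"
proof -
  define a where "a = - ln (1 + (real N - 1) * exp (- real N))"
  have c_pos: "1 + (real N - 1) * exp (- real N) > 0"
    using spike_normaliser_ge_one[OF assms] by linarith
  have "ln (spike N 0) = a" using c_pos by (simp add: spike_def a_def ln_div)
  moreover have "ln (spike N k) = a - real N" if "k > 0" for k
    using c_pos that by (simp add: spike_def a_def ln_div)
  ultimately have "D N (spike N) = 2 * ln (real N)
      + (real N - 1) * (a - (a - real N))\<^sup>2 / (real N)\<^sup>2 + 2 * (a + (real N - 1) * (a - real N)) / real N"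
    by (intro D_two_level assms)
  also have "\<dots> = 2 * ln (real N) - (real N - 1) + 2 * a"
    using assms by (simp add: field_simps power2_eq_square)
  finally show ?thesis by (simp add: a_def)
qed

lemma two_ln_less_minus_one:
  fixes x :: real
  assumes "x > 9"
  shows "2 * ln x < x - 1"
proof -
  define s where "s = sqrt x"
  have s_sq: "s\<^sup>2 = x" using assms by (simp add: s_def)
  have "sqrt 9 < sqrt x" using assms by (subst real_sqrt_less_iff) simp
  then have s_gt: "s > 3" by (simp add: s_def)
  have "ln x = 2 * ln s" using s_gt by (simp add: s_sq[symmetric] ln_realpow)
  also have "\<dots> \<le> 2 * (s - 1)" using s_gt ln_le_minus_one[of s] by simp
  finally have "2 * ln x \<le> 4 * (s - 1)" by simp
  also have "\<dots> < s\<^sup>2 - 1"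
    using mult_pos_pos[of "s - 1" "s - 3"] s_gt by (simp add: power2_eq_square algebra_simps)
  finally show ?thesis using s_sq by simp
qed

lemma D_spike_neg:
  assumes "N \<ge> 10"
  shows "D N (spike N) < 0"
proof -
  have "2 * ln (real N) < real N - 1" using assms by (intro two_ln_less_minus_one) simp
  moreover have "ln (1 + (real N - 1) * exp (- real N)) \<ge> 0"
    using spike_normaliser_ge_one[of N] assms by simp
  moreover have "D N (spike N) = 2 * ln (real N) - (real N - 1)
      - 2 * ln (1 + (real N - 1) * exp (- real N))"
    using assms by (intro D_spike) simp
  ultimately show ?thesis by linarith
qed

theorem mainTheorem4:
  fixes n :: int
  assumes "n > 2"
  shows "\<exists>N::nat. int N \<ge> n \<and> (\<exists>p. prob_vector N p \<and> D N p < 0)"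
proof -
  define N where "N = nat n + 10"
  have "int N \<ge> n" and "N \<ge> 10" using assms by (simp_all add: N_def)
  then show ?thesis using prob_vector_spike[of N] D_spike_neg[of N] by auto
qed

end
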